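(* Let $(X,d,G)$ be a $G$-system with $\overline{\mathrm{mdim}}_M(G,X,d)<\infty$, and let $\mu$ be a finite signed Borel measure on $X$. Then the following are equivalent: (i) $\mu\in M(X,G)$; (ii) $\int f\,d\mu\le\underline{\mathrm{mdim}}_M(G,X,f,d)$ for all $f\in C(X,\mathbb R)$; (iii) $\int f\,d\mu\le\overline{\mathrm{mdim}}_M(G,X,f,d)$ for all $f\in C(X,\mathbb R)$.
   Context: $G$ is a countably infinite discrete amenable group; $(X,d,G)$ a compact metric space with continuous $G$-action by homeomorphisms; $M(X,G)$ the set of $G$-invariant Borel probability measures. Let $\{F_n\}$ be a Følner sequence ($|gF_n\triangle F_n|/|F_n|\to0$); the quantities below do not depend on its choice. $d_F(x,y)=\max_{g\in F}d(gx,gy)$, $S_Ff(x)=\sum_{g\in F}f(gx)$, $P_F(X,f,d,\epsilon)=\sup\{\sum_{x\in E}e^{S_Ff(x)}:E\subset X$ with $d_F(x,y)>\epsilon$ for distinct $x,y\in E\}$, $P(X,f,d,\{F_n\},\epsilon)=\limsup_n\frac1{|F_n|}\log P_{F_n}(X,f,d,\epsilon)$. Then $\overline{\mathrm{mdim}}_M(G,X,f,d)=\limsup_{\epsilon\to0}\frac{P(X,f\log(1/\epsilon),d,\{F_n\},\epsilon)}{\log(1/\epsilon)}$ and $\underline{\mathrm{mdim}}_M(G,X,f,d)$ is the same with $\liminf_{\epsilon\to0}$; $\overline{\mathrm{mdim}}_M(G,X,d)=\overline{\mathrm{mdim}}_M(G,X,0,d)$. *)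

theory Defs
  imports "HOL-Analysis.Analysis" "HOL-Probability.Probability"
begin

(* G is a type 'g with (not necessarily commutative) group structure written additively;
   act g x is the action of g on x. *)

definition G_system :: "('g::group_add \<Rightarrow> 'x::metric_space \<Rightarrow> 'x) \<Rightarrow> 'x set \<Rightarrow> bool" where
  "G_system act X \<longleftrightarrow> compact X \<and> X \<noteq> {} \<and>
     (\<forall>g. continuous_on X (act g) \<and> act g ` X \<subseteq> X) \<and>
     (\<forall>x\<in>X. act 0 x = x) \<and>
     (\<forall>g h. \<forall>x\<in>X. act (g + h) x = act g (act h x))"

definition sym_diff :: "'a set \<Rightarrow> 'a set \<Rightarrow> 'a set" where
  "sym_diff A B = (A - B) \<union> (B - A)"

definition Folner_seq :: "(nat \<Rightarrow> 'g::group_add set) \<Rightarrow> bool" where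
  "Folner_seq Fs \<longleftrightarrow> (\<forall>n. finite (Fs n) \<and> Fs n \<noteq> {}) \<and>
     (\<forall>g. (\<lambda>n. real (card (sym_diff ((\<lambda>h. g + h) ` Fs n) (Fs n))) / real (card (Fs n)))
            \<longlonglongrightarrow> 0)"

definition dF :: "('g \<Rightarrow> 'x::metric_space \<Rightarrow> 'x) \<Rightarrow> 'g set \<Rightarrow> 'x \<Rightarrow> 'x \<Rightarrow> real" where
  "dF act F x y = Max ((\<lambda>g. dist (act g x) (act g y)) ` F)"

definition SF :: "('g \<Rightarrow> 'x \<Rightarrow> 'x) \<Rightarrow> 'g set \<Rightarrow> ('x \<Rightarrow> real) \<Rightarrow> 'x \<Rightarrow> real" where
  "SF act F f x = (\<Sum>g\<in>F. f (act g x))"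

(* P_F(X,f,d,eps): supremum over (eps,d_F)-separated subsets E of X.
   Such sets are finite since X is compact. *)
definition PF :: "('g \<Rightarrow> 'x::metric_space \<Rightarrow> 'x) \<Rightarrow> 'x set \<Rightarrow> ('x \<Rightarrow> real) \<Rightarrow> 'g set \<Rightarrow> real \<Rightarrow> real" where
  "PF act X f F eps = Sup {(\<Sum>x\<in>E. exp (SF act F f x)) | E.
      finite E \<and> E \<subseteq> X \<and> (\<forall>x\<in>E. \<forall>y\<in>E. x \<noteq> y \<longrightarrow> dF act F x y > eps)}"

definition pressure :: "('g \<Rightarrow> 'x::metric_space \<Rightarrow> 'x) \<Rightarrow> 'x set \<Rightarrow> ('x \<Rightarrow> real) \<Rightarrow> (nat \<Rightarrow> 'g set) \<Rightarrow> real \<Rightarrow> ereal" where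
  "pressure act X f Fs eps =
     limsup (\<lambda>n. ereal (ln (PF act X f (Fs n) eps) / real (card (Fs n))))"

definition mdim_upper :: "('g \<Rightarrow> 'x::metric_space \<Rightarrow> 'x) \<Rightarrow> 'x set \<Rightarrow> (nat \<Rightarrow> 'g set) \<Rightarrow> ('x \<Rightarrow> real) \<Rightarrow> ereal" where
  "mdim_upper act X Fs f =
     Limsup (at_right 0) (\<lambda>eps. pressure act X (\<lambda>x. f x * ln (1 / eps)) Fs eps / ereal (ln (1 / eps)))"

definition mdim_lower :: "('g \<Rightarrow> 'x::metric_space \<Rightarrow> 'x) \<Rightarrow> 'x set \<Rightarrow> (nat \<Rightarrow> 'g set) \<Rightarrow> ('x \<Rightarrow> real) \<Rightarrow> ereal" where
  "mdim_lower act X Fs f =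
     Liminf (at_right 0) (\<lambda>eps. pressure act X (\<lambda>x. f x * ln (1 / eps)) Fs eps / ereal (ln (1 / eps)))"

(* A finite signed Borel measure on X is represented (Jordan decomposition) as
   mu = mu_pos - mu_neg with mu_pos, mu_neg finite Borel measures on X. *)
definition finite_borel_on :: "'x::topological_space set \<Rightarrow> 'x measure \<Rightarrow> bool" where
  "finite_borel_on X M \<longleftrightarrow> sets M = sets (restrict_space borel X) \<and> finite_measure M"

definition signed_val :: "'x measure \<Rightarrow> 'x measure \<Rightarrow> 'x set \<Rightarrow> real" where
  "signed_val Mp Mn A = measure Mp A - measure Mn A"

definition signed_integral :: "'x measure \<Rightarrow> 'x measure \<Rightarrow> ('x \<Rightarrow> real) \<Rightarrow> real" where
  "signed_integral Mp Mn f = integral\<^sup>L Mp f - integral\<^sup>L Mn f"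

definition invariant_prob :: "('g \<Rightarrow> 'x::topological_space \<Rightarrow> 'x) \<Rightarrow> 'x set \<Rightarrow> 'x measure \<Rightarrow> 'x measure \<Rightarrow> bool" where
  "invariant_prob act X Mp Mn \<longleftrightarrow>
     (\<forall>A\<in>sets (restrict_space borel X). signed_val Mp Mn A \<ge> 0) \<and>
     signed_val Mp Mn X = 1 \<and>
     (\<forall>g. \<forall>A\<in>sets (restrict_space borel X).
        signed_val Mp Mn (act g -` A \<inter> X) = signed_val Mp Mn A)"

end

theory Submission
  imports Defs
begin

(*
  (i) implies (ii): for invariant mu, the integral of S_F f is |F| times the integral of f, so
  S_F f attains a value at least |F| * int f dmu at some point x, and the one-point separated
  set {x} gives P_F >= exp (S_F f x). Hence P(f log(1/eps)) >= log(1/eps) * int f dmu for all eps.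
  (ii) implies (iii) because the lower mean dimension is below the upper one.
  (iii) implies (i): if S_{F_n} u <= c_n with c_n / |F_n| -> a, then the upper mean dimension of u
  is at most that of 0 plus a. The latter is finite, so applying (iii) to t u and letting t -> oo
  gives int u dmu <= a. This yields int 1 dmu = 1, int f dmu >= 0 for f >= 0 and, by the Folner
  property, int (f o g) dmu = int f dmu. Inner regularity by closed sets turns these statements
  about continuous functions into the defining properties of M(X,G) on Borel sets.
*)

lemma nn_integral_add_measures:
  assumes sets: "sets N1 = sets M" "sets N2 = sets M"
    and emeasure: "\<And>A. A \<in> sets M \<Longrightarrow> emeasure M A = emeasure N1 A + emeasure N2 A"
    and u: "u \<in> borel_measurable M"
  shows "(\<integral>\<^sup>+x. u x \<partial>M) = (\<integral>\<^sup>+x. u x \<partial>N1) + (\<integral>\<^sup>+x. u x \<partial>N2)"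
proof -
  have meas: "h \<in> borel_measurable N1" "h \<in> borel_measurable N2"
    if "h \<in> borel_measurable M" for h :: "'a \<Rightarrow> ennreal"
    using that measurable_cong_sets[OF sets(1) refl] measurable_cong_sets[OF sets(2) refl] by blast+
  show ?thesis
    using u
  proof (induct rule: borel_measurable_induct)
    case (cong f g)
    have "integral\<^sup>N K f = integral\<^sup>N K g" if "sets K = sets M" for K
      using cong sets_eq_imp_space_eq[OF that] by (intro nn_integral_cong) simp
    with cong sets show ?case by simp
  next
    case (set A)
    then show ?case using sets emeasure by simp
  next
    case (mult u c)
    then show ?case by (simp add: meas nn_integral_cmult distrib_left)
  next
    case (add u v)
    then show ?case by (simp add: meas nn_integral_add algebra_simps)
  next
    case (seq U)
    have SUP_fun: "(SUP i. U i) = (\<lambda>x. SUP i. U i x)"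
      by (auto simp: image_comp)
    have SUP: "integral\<^sup>N N (SUP i. U i) = (SUP i. integral\<^sup>N N (U i))"
      if "\<And>i. U i \<in> borel_measurable N" for N
      unfolding SUP_fun by (rule nn_integral_monotone_convergence_SUP) (use seq(4) that in auto)
    have "integral\<^sup>N M (SUP i. U i) = (SUP i. integral\<^sup>N N1 (U i) + integral\<^sup>N N2 (U i))"
      unfolding SUP[OF seq(1)] seq(3) ..
    also have "\<dots> = integral\<^sup>N N1 (SUP i. U i) + integral\<^sup>N N2 (SUP i. U i)"
      unfolding SUP[OF meas(1)[OF seq(1)]] SUP[OF meas(2)[OF seq(1)]]
      by (rule ennreal_SUP_add)
        (auto intro!: nn_integral_mono meas seq(1) simp: incseq_def le_funD[OF incseqD[OF seq(4)]])
    finally show ?case .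
  qed
qed

lemma integral_add_measures:
  fixes f :: "'a \<Rightarrow> real"
  assumes sets: "sets N1 = sets M" "sets N2 = sets M"
    and emeasure: "\<And>A. A \<in> sets M \<Longrightarrow> emeasure M A = emeasure N1 A + emeasure N2 A"
    and integrable: "integrable N1 f" "integrable N2 f"
  shows "integral\<^sup>L M f = integral\<^sup>L N1 f + integral\<^sup>L N2 f"
proof -
  have f: "f \<in> borel_measurable M"
    using integrable(1) measurable_cong_sets[OF sets(1) refl] by blast
  have add: "(\<integral>\<^sup>+x. ennreal (h x) \<partial>M) = (\<integral>\<^sup>+x. ennreal (h x) \<partial>N1) + (\<integral>\<^sup>+x. ennreal (h x) \<partial>N2)"
    if "h \<in> borel_measurable M" for h :: "'a \<Rightarrow> real"
    using nn_integral_add_measures[OF sets emeasure] that by simp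
  have fin: "(\<integral>\<^sup>+x. ennreal (f x) \<partial>N) < \<infinity>" "(\<integral>\<^sup>+x. ennreal (- f x) \<partial>N) < \<infinity>"
    if "integrable N f" for N
    using integrableD(2,3)[OF that] by (simp_all add: less_top)
  have "integrable M f"
    unfolding real_integrable_def using f add[of f] add[of "\<lambda>x. - f x"] fin integrable
    by (auto simp: less_top[symmetric])
  then show ?thesis
    unfolding real_lebesgue_integral_def[OF integrable(1)] real_lebesgue_integral_def[OF integrable(2)]
      real_lebesgue_integral_def[OF \<open>integrable M f\<close>]
    using f add[of f] add[of "\<lambda>x. - f x"] fin integrable by (simp add: enn2real_plus)
qed

lemma integrable_continuous_on_compact:
  fixes f :: "'a::topological_space \<Rightarrow> real"
  assumes "finite_measure M" "sets M = sets (restrict_space borel X)" "compact X" "continuous_on X f"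
  shows "integrable M f"
proof -
  obtain B where "\<And>x. x \<in> X \<Longrightarrow> norm (f x) \<le> B"
    using continuous_on_compact_bound[OF assms(3,4)] by blast
  moreover have "space M = X"
    using sets_eq_imp_space_eq[OF assms(2)] by (simp add: space_restrict_space)
  moreover have "f \<in> borel_measurable M"
    using measurable_cong_sets[OF assms(2) refl] borel_measurable_continuous_on_restrict[OF assms(4)]
    by blast
  ultimately show ?thesis
    by (intro finite_measure.integrable_const_bound[OF assms(1), where B = B]) auto
qed

lemma sets_restrict_borel_closed_iff:
  assumes "sets M = sets (restrict_space borel X)" "closed X"
  shows "A \<in> sets M \<longleftrightarrow> A \<subseteq> X \<and> A \<in> sets borel"
  using assms by (simp add: sets_restrict_space_iff)

lemma (in finite_measure) measure_UN_le_sums: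
  assumes "\<And>i. W i \<in> sets M" "\<And>i. measure M (W i) \<le> \<delta> i" "\<delta> sums s"
  shows "measure M (\<Union>i. W i) \<le> s"
proof -
  have summable: "summable (\<lambda>i. measure M (W i))"
    using assms(2) by (intro summable_comparison_test'[OF sums_summable[OF assms(3)], of 0]) simp
  have "measure M (\<Union>i. W i) \<le> (\<Sum>i. measure M (W i))"
    using assms(1) summable by (intro finite_measure_subadditive_countably) auto
  also have "\<dots> \<le> (\<Sum>i. \<delta> i)"
    by (rule suminf_le[OF assms(2) summable sums_summable[OF assms(3)]])
  finally show ?thesis
    using assms(3) by (simp add: sums_iff)
qed

lemma (in finite_measure) measure_UN_diff_UN_lessThan_less:
  fixes A :: "nat \<Rightarrow> 'a set"
  assumes "\<And>i. A i \<in> sets M" "e > 0"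
  obtains N where "measure M ((\<Union>i. A i) - (\<Union>i<N. A i)) < e"
proof -
  have "(\<lambda>n. measure M (\<Union>i<n. A i)) \<longlonglongrightarrow> measure M (\<Union>n. \<Union>i<n. A i)"
    using assms(1) by (intro finite_Lim_measure_incseq) (auto simp: incseq_def intro: less_le_trans)
  moreover have "(\<Union>n. \<Union>i<n. A i) = (\<Union>i. A i)"
    by blast
  ultimately have "\<forall>\<^sub>F n in sequentially. measure M (\<Union>i. A i) - e < measure M (\<Union>i<n. A i)"
    using \<open>e > 0\<close> by (intro order_tendstoD(1)[of _ "measure M (\<Union>i. A i)"]) simp_all
  then obtain N where "measure M (\<Union>i. A i) - e < measure M (\<Union>i<N. A i)"
    by (auto simp: eventually_sequentially)
  moreover have "measure M ((\<Union>i. A i) - (\<Union>i<N. A i)) = measure M (\<Union>i. A i) - measure M (\<Union>i<N. A i)"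
    using assms(1) by (intro finite_measure_Diff) auto
  ultimately show ?thesis
    by (intro that[of N]) linarith
qed

section \<open>Inner regularity by closed sets\<close>

(* These sets form a sigma-algebra containing the closed sets; this gives inner regularity. *)
definition closed_open_approximable :: "'a::topological_space measure \<Rightarrow> 'a set \<Rightarrow> 'a set \<Rightarrow> bool" where
  "closed_open_approximable M X A \<longleftrightarrow>
     (\<forall>e>0. \<exists>C U. closed C \<and> C \<subseteq> A \<and> open U \<and> A \<subseteq> U \<and> measure M (U \<inter> X - C) < e)"

context
  fixes M :: "'a::metric_space measure" and X :: "'a set"
  assumes finite_M: "finite_measure M"
    and sets_M: "sets M = sets (restrict_space borel X)"
    and closed_X: "closed X"
begin

interpretation finite_measure M by (rule finite_M)

private lemmas sets_M_iff = sets_restrict_borel_closed_iff[OF sets_M closed_X]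

lemma measure_thickening_diff_tendsto_0:
  assumes "closed A" "A \<subseteq> X" "A \<noteq> {}"
  shows "(\<lambda>n. measure M ({x. infdist x A < 1 / Suc n} \<inter> X - A)) \<longlonglongrightarrow> 0"
proof -
  define U where "U n = {x. infdist x A < 1 / Suc n}" for n
  have empty: "(\<Inter>n. U n \<inter> X - A) = {}"
  proof safe
    fix x assume x: "x \<in> (\<Inter>n. U n \<inter> X - A)"
    have "infdist x A \<le> 0"
    proof (rule field_le_epsilon[where y = 0, simplified])
      fix d :: real assume "d > 0"
      then obtain n where "1 / Suc n < d" using nat_approx_posE by blast
      moreover have "infdist x A < 1 / Suc n" using x by (auto simp: U_def)
      ultimately show "infdist x A \<le> d" by linarith
    qed
    with x show "x \<in> {}"
      using in_closed_iff_infdist_zero[OF assms(1,3)] infdist_nonneg[of x A] by auto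
  qed
  have "(\<lambda>n. measure M (U n \<inter> X - A)) \<longlonglongrightarrow> measure M (\<Inter>n. U n \<inter> X - A)"
  proof (rule finite_Lim_measure_decseq)
    have "open (U n)" for n
      unfolding U_def by (intro open_Collect_less continuous_intros)
    then show "range (\<lambda>n. U n \<inter> X - A) \<subseteq> sets M"
      using assms closed_X by (auto simp: sets_M_iff)
    show "decseq (\<lambda>n. U n \<inter> X - A)"
      by (rule decseq_SucI) (auto simp: U_def less_le_trans[OF _ frac_le])
  qed
  then have "(\<lambda>n. measure M (U n \<inter> X - A)) \<longlonglongrightarrow> 0"
    unfolding empty by simp
  then show ?thesis
    by (simp add: U_def)
qed

lemma closed_open_approximable_closed:
  assumes "closed A" "A \<subseteq> X"
  shows "closed_open_approximable M X A"
  unfolding closed_open_approximable_def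
proof (intro allI impI)
  fix e :: real assume "e > 0"
  show "\<exists>C U. closed C \<and> C \<subseteq> A \<and> open U \<and> A \<subseteq> U \<and> measure M (U \<inter> X - C) < e"
  proof (cases "A = {}")
    case True
    with \<open>e > 0\<close> show ?thesis by auto
  next
    case False
    define U where "U n = {x. infdist x A < 1 / Suc n}" for n
    have "\<forall>\<^sub>F n in sequentially. measure M (U n \<inter> X - A) < e"
      using measure_thickening_diff_tendsto_0[OF assms False] \<open>e > 0\<close>
      unfolding U_def by (rule order_tendstoD(2))
    then obtain n where small: "measure M (U n \<inter> X - A) < e"
      by (auto simp: eventually_sequentially)
    show ?thesis
    proof (intro exI conjI)
      show "closed A" "A \<subseteq> A" by (simp_all add: \<open>closed A\<close>)
      show "open (U n)"
        unfolding U_def by (intro open_Collect_less continuous_intros)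
      show "A \<subseteq> U n" by (auto simp: U_def)
      show "measure M (U n \<inter> X - A) < e" by (rule small)
    qed
  qed
qed

lemma closed_open_approximable_Diff:
  assumes "closed_open_approximable M X A"
  shows "closed_open_approximable M X (X - A)"
  unfolding closed_open_approximable_def
proof (intro allI impI)
  fix e :: real assume "e > 0"
  with assms obtain C U where CU: "closed C" "C \<subseteq> A" "open U" "A \<subseteq> U" "measure M (U \<inter> X - C) < e"
    unfolding closed_open_approximable_def by meson
  have "- C \<inter> X - (X - U) = U \<inter> X - C" by blast
  with CU closed_X have "closed (X - U) \<and> X - U \<subseteq> X - A \<and> open (- C) \<and> X - A \<subseteq> - C \<and>
      measure M (- C \<inter> X - (X - U)) < e"
    by (simp add: closed_Diff open_Compl) blast
  then show "\<exists>C' U'. closed C' \<and> C' \<subseteq> X - A \<and> open U' \<and> X - A \<subseteq> U' \<and>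
      measure M (U' \<inter> X - C') < e"
    by blast
qed

lemma closed_open_approximable_UN:
  fixes A :: "nat \<Rightarrow> 'a set"
  assumes approx: "\<And>i. closed_open_approximable M X (A i)" and sets_A: "\<And>i. A i \<in> sets M"
  shows "closed_open_approximable M X (\<Union>i. A i)"
  unfolding closed_open_approximable_def
proof (intro allI impI)
  fix e :: real assume "e > 0"
  define \<delta> where "\<delta> = (\<lambda>i. e / 2 * (1 / 2) ^ Suc i)"
  have "\<delta> i > 0" for i
    using \<open>e > 0\<close> by (simp add: \<delta>_def)
  then have "\<forall>i. \<exists>C U. closed C \<and> C \<subseteq> A i \<and> open U \<and> A i \<subseteq> U \<and> measure M (U \<inter> X - C) < \<delta> i"
    using approx unfolding closed_open_approximable_def by blast
  then obtain C U where C: "\<And>i. closed (C i)" "\<And>i. C i \<subseteq> A i"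
    and U: "\<And>i. open (U i)" "\<And>i. A i \<subseteq> U i"
    and gap: "\<And>i. measure M (U i \<inter> X - C i) < \<delta> i"
    by metis
  have sets_gap: "U i \<inter> X - C i \<in> sets M" for i
    using sets_A[of i] C U closed_X by (auto simp: sets_M_iff)
  have "\<delta> sums (e / 2)"
    unfolding \<delta>_def using sums_mult[OF power_half_series, of "e / 2"] by simp
  then have gaps_small: "measure M (\<Union>i. U i \<inter> X - C i) \<le> e / 2"
    using sets_gap gap by (intro measure_UN_le_sums) (auto intro: less_imp_le)
  obtain N where tail_small: "measure M ((\<Union>i. A i) - (\<Union>i<N. A i)) < e / 2"
    by (rule measure_UN_diff_UN_lessThan_less[where A = A and e = "e / 2", OF sets_A])
      (use \<open>e > 0\<close> in simp)
  have "(\<Union>i. U i) \<inter> X - (\<Union>i<N. C i) \<subseteq> (\<Union>i. U i \<inter> X - C i) \<union> ((\<Union>i. A i) - (\<Union>i<N. A i))"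
    using C(2) U(2) by blast
  then have "measure M ((\<Union>i. U i) \<inter> X - (\<Union>i<N. C i)) \<le>
      measure M ((\<Union>i. U i \<inter> X - C i) \<union> ((\<Union>i. A i) - (\<Union>i<N. A i)))"
    using sets_gap sets_A by (intro finite_measure_mono) auto
  also have "\<dots> \<le> measure M (\<Union>i. U i \<inter> X - C i) + measure M ((\<Union>i. A i) - (\<Union>i<N. A i))"
    using sets_gap sets_A by (intro measure_Un_le) auto
  finally have small: "measure M ((\<Union>i. U i) \<inter> X - (\<Union>i<N. C i)) < e"
    using gaps_small tail_small by linarith
  show "\<exists>C' U'. closed C' \<and> C' \<subseteq> (\<Union>i. A i) \<and> open U' \<and> (\<Union>i. A i) \<subseteq> U' \<and>
      measure M (U' \<inter> X - C') < e"
  proof (intro exI conjI)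
    show "closed (\<Union>i<N. C i)" "open (\<Union>i. U i)"
      using C(1) U(1) by auto
    show "(\<Union>i<N. C i) \<subseteq> (\<Union>i. A i)" "(\<Union>i. A i) \<subseteq> (\<Union>i. U i)"
      using C(2) U(2) by blast+
  qed (rule small)
qed

lemma closed_open_approximable_sets:
  assumes "A \<in> sets M"
  shows "closed_open_approximable M X A"
proof -
  obtain B where B: "B \<in> sigma_sets UNIV (Collect closed)" and A: "A = X \<inter> B"
    using assms by (auto simp: sets_M sets_restrict_space borel_eq_closed)
  from B have "closed_open_approximable M X (X \<inter> B)"
  proof induct
    case (Basic a)
    then show ?case using closed_X by (intro closed_open_approximable_closed) auto
  next
    case Empty
    show ?case by (intro closed_open_approximable_closed) auto
  next
    case (Compl a)
    have "X \<inter> (UNIV - a) = X - (X \<inter> a)" by blast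
    with Compl(2) show ?case by (simp only: closed_open_approximable_Diff)
  next
    case (Union A)
    have "A i \<in> sets borel" for i
      using Union(1)[of i] by (simp add: borel_eq_closed)
    then have "X \<inter> A i \<in> sets M" for i
      using closed_X by (simp add: sets_M_iff)
    moreover have "X \<inter> (\<Union>i. A i) = (\<Union>i. X \<inter> A i)" by blast
    ultimately show ?case
      using closed_open_approximable_UN[of "\<lambda>i. X \<inter> A i"] Union(2) by simp
  qed
  with A show ?thesis by simp
qed

lemma closed_inner_regular:
  assumes "A \<in> sets M" "e > 0"
  obtains C where "closed C" "C \<subseteq> A" "measure M A < measure M C + e"
proof -
  obtain C U where C: "closed C" "C \<subseteq> A" and U: "open U" "A \<subseteq> U"
    and gap: "measure M (U \<inter> X - C) < e"
    using closed_open_approximable_sets[OF assms(1)] assms(2)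
    unfolding closed_open_approximable_def by meson
  have A_X: "A \<subseteq> X" and sets_C: "C \<in> sets M" and sets_gap: "U \<inter> X - C \<in> sets M"
    using assms(1) C U closed_X by (auto simp: sets_M_iff)
  have "measure M A - measure M C = measure M (A - C)"
    using finite_measure_Diff[OF assms(1) sets_C C(2)] by simp
  also have "\<dots> \<le> measure M (U \<inter> X - C)"
    using A_X U(2) sets_gap by (intro finite_measure_mono) auto
  finally show ?thesis
    using that[OF C] gap by linarith
qed

lemma integral_tendsto_measure_closed:
  assumes "closed C" "C \<subseteq> X" "C \<noteq> {}"
  shows "(\<lambda>n. \<integral>x. max 0 (1 - Suc n * infdist x C) \<partial>M) \<longlonglongrightarrow> measure M C"
proof -
  have sets_C: "C \<in> sets M"
    using assms closed_X by (simp add: sets_M_iff)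
  have "(\<lambda>n. \<integral>x. max 0 (1 - Suc n * infdist x C) \<partial>M) \<longlonglongrightarrow> (\<integral>x. indicator C x \<partial>M)"
  proof (rule integral_dominated_convergence[where w = "\<lambda>_. 1"])
    show "(\<lambda>x. max 0 (1 - Suc n * infdist x C)) \<in> borel_measurable M" for n
      by (simp add: measurable_cong_sets[OF sets_M refl] borel_measurable_continuous_on_restrict continuous_intros)
    show "AE x in M. norm (max 0 (1 - Suc n * infdist x C)) \<le> 1" for n
      using infdist_nonneg[of _ C] by (intro AE_I2) auto
    show "AE x in M. (\<lambda>n. max 0 (1 - Suc n * infdist x C)) \<longlonglongrightarrow> indicator C x"
    proof (intro AE_I2)
      fix x
      show "(\<lambda>n. max 0 (1 - Suc n * infdist x C)) \<longlonglongrightarrow> indicator C x"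
      proof (cases "x \<in> C")
        case False
        then have "infdist x C > 0"
          using in_closed_iff_infdist_zero[OF assms(1,3)] infdist_nonneg[of x C] by auto
        then obtain N :: nat where N: "1 < N * infdist x C"
          using reals_Archimedean3 by blast
        have "max 0 (1 - Suc n * infdist x C) = 0" if "N \<le> n" for n
        proof -
          have "N * infdist x C \<le> Suc n * infdist x C"
            using that \<open>infdist x C > 0\<close> by (intro mult_right_mono) auto
          with N show ?thesis by simp
        qed
        then have "\<forall>\<^sub>F n in sequentially. max 0 (1 - Suc n * infdist x C) = 0"
          by (auto simp: eventually_sequentially)
        with False show ?thesis by (simp add: tendsto_eventually)
      qed simp
    qed
  qed (use sets_C in simp_all)
  then show ?thesis
    using sets_C by simp
qed

end

(* Two measures on each side, because the signed measure Mp - Mn is not itself a measure. *)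
context
  fixes P1 P2 Q1 Q2 :: "'a::metric_space measure" and X :: "'a set"
  assumes finite: "finite_measure P1" "finite_measure P2" "finite_measure Q1" "finite_measure Q2"
    and sets: "sets P1 = sets (restrict_space borel X)" "sets P2 = sets (restrict_space borel X)"
      "sets Q1 = sets (restrict_space borel X)" "sets Q2 = sets (restrict_space borel X)"
    and closed_X: "closed X"
    and integral_le: "\<And>f :: 'a \<Rightarrow> real. continuous_on X f \<Longrightarrow> (\<And>x. x \<in> X \<Longrightarrow> 0 \<le> f x \<and> f x \<le> 1) \<Longrightarrow>
      (\<integral>x. f x \<partial>P1) + (\<integral>x. f x \<partial>P2) \<le> (\<integral>x. f x \<partial>Q1) + (\<integral>x. f x \<partial>Q2)"
begin

lemma measure_le_if_integral_le_closed:
  assumes "closed C" "C \<subseteq> X"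
  shows "measure P1 C + measure P2 C \<le> measure Q1 C + measure Q2 C"
proof (cases "C = {}")
  case False
  define f where "f n x = max 0 (1 - Suc n * infdist x C)" for n x
  note lim = integral_tendsto_measure_closed[OF _ _ closed_X assms False, folded f_def]
  show ?thesis
  proof (rule LIMSEQ_le)
    show "(\<lambda>n. (\<integral>x. f n x \<partial>P1) + (\<integral>x. f n x \<partial>P2)) \<longlonglongrightarrow> measure P1 C + measure P2 C"
      by (intro tendsto_add lim finite sets)
    show "(\<lambda>n. (\<integral>x. f n x \<partial>Q1) + (\<integral>x. f n x \<partial>Q2)) \<longlonglongrightarrow> measure Q1 C + measure Q2 C"
      by (intro tendsto_add lim finite sets)
    have continuous: "continuous_on X (f n)" for n
      unfolding f_def by (intro continuous_intros)
    have "(\<integral>x. f n x \<partial>P1) + (\<integral>x. f n x \<partial>P2) \<le> (\<integral>x. f n x \<partial>Q1) + (\<integral>x. f n x \<partial>Q2)" for n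
      by (rule integral_le, fact continuous) (use infdist_nonneg[of _ C] in \<open>simp add: f_def\<close>)
    then show "\<exists>N. \<forall>n\<ge>N. (\<integral>x. f n x \<partial>P1) + (\<integral>x. f n x \<partial>P2) \<le> (\<integral>x. f n x \<partial>Q1) + (\<integral>x. f n x \<partial>Q2)"
      by blast
  qed
qed simp

lemma measure_le_if_integral_le:
  assumes A: "A \<in> sets (restrict_space borel X)"
  shows "measure P1 A + measure P2 A \<le> measure Q1 A + measure Q2 A"
proof (rule field_le_epsilon)
  fix e :: real assume "e > 0"
  then have "e / 2 > 0" by simp
  obtain C1 where C1: "closed C1" "C1 \<subseteq> A" "measure P1 A < measure P1 C1 + e / 2"
    by (rule closed_inner_regular[OF finite(1) sets(1) closed_X _ \<open>e / 2 > 0\<close>]) (use A sets(1) in simp)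
  obtain C2 where C2: "closed C2" "C2 \<subseteq> A" "measure P2 A < measure P2 C2 + e / 2"
    by (rule closed_inner_regular[OF finite(2) sets(2) closed_X _ \<open>e / 2 > 0\<close>]) (use A sets(2) in simp)
  have A_X: "A \<subseteq> X"
    using A by (auto simp: sets_restrict_space)
  have sets_C: "C1 \<union> C2 \<in> sets (restrict_space borel X)"
    using A_X C1(1,2) C2(1,2) closed_X by (auto simp: sets_restrict_space_iff)
  have "measure P1 C1 \<le> measure P1 (C1 \<union> C2)" "measure P2 C2 \<le> measure P2 (C1 \<union> C2)"
    using sets_C sets by (auto intro!: finite_measure.finite_measure_mono finite)
  moreover have "measure Q1 (C1 \<union> C2) \<le> measure Q1 A" "measure Q2 (C1 \<union> C2) \<le> measure Q2 A"
    using A C1(2) C2(2) sets by (auto intro!: finite_measure.finite_measure_mono finite)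
  moreover have "measure P1 (C1 \<union> C2) + measure P2 (C1 \<union> C2) \<le> measure Q1 (C1 \<union> C2) + measure Q2 (C1 \<union> C2)"
    using C1 C2 A_X by (intro measure_le_if_integral_le_closed) auto
  ultimately show "measure P1 A + measure P2 A \<le> measure Q1 A + measure Q2 A + e"
    using C1(3) C2(3) by linarith
qed

end

section \<open>Pressure and mean dimension\<close>

lemma SF_mult_right: "SF act F (\<lambda>x. u x * c) x = SF act F u x * c"
  unfolding SF_def by (simp add: sum_distrib_right)

lemma SF_zero [simp]: "SF act F (\<lambda>_. 0) x = 0"
  unfolding SF_def by simp

lemma abs_sum_diff_le_card_sym_diff:
  fixes \<phi> :: "'a \<Rightarrow> real"
  assumes "finite A" "finite B" and bound: "\<And>k. \<bar>\<phi> k\<bar> \<le> c"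
  shows "\<bar>sum \<phi> A - sum \<phi> B\<bar> \<le> c * card (sym_diff A B)"
proof -
  have abs_sum: "\<bar>sum \<phi> S\<bar> \<le> c * card S" for S
    using order_trans[OF sum_abs sum_bounded_above[of S "\<lambda>k. \<bar>\<phi> k\<bar>" c]] bound
    by (simp add: mult.commute)
  have "sum \<phi> A - sum \<phi> B = sum \<phi> (A - B) - sum \<phi> (B - A)"
    using sum.Int_Diff[OF assms(1), of \<phi> B] sum.Int_Diff[OF assms(2), of \<phi> A]
    by (simp add: Int_commute)
  moreover have "card (sym_diff A B) = card (A - B) + card (B - A)"
    unfolding sym_diff_def using assms(1,2) by (intro card_Un_disjoint) auto
  ultimately show ?thesis
    using abs_sum[of "A - B"] abs_sum[of "B - A"] by (simp add: distrib_left)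
qed

lemma ereal_add_divide_real:
  fixes y :: ereal
  assumes "L > 0"
  shows "(y + ereal b) / ereal L = y / ereal L + ereal (b / L)"
  using assms by (cases y) (auto simp: add_divide_distrib)

lemma mdim_lower_le_mdim_upper: "mdim_lower act X Fs f \<le> mdim_upper act X Fs f"
  unfolding mdim_lower_def mdim_upper_def by (rule Liminf_le_Limsup) simp

lemma SF_diff: "SF act F (\<lambda>x. u x - v x) x = SF act F u x - SF act F v x"
  unfolding SF_def by (simp add: sum_subtractf)

lemma eventually_at_right_0_lt_1: "\<forall>\<^sub>F eps in at_right 0. 0 < eps \<and> eps < (1::real)"
  using eventually_at_right_real[of 0 1] by simp

locale dynamical_system =
  fixes act :: "'g::group_add \<Rightarrow> 'x::metric_space \<Rightarrow> 'x" and X :: "'x set"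
  assumes G_system: "G_system act X"
begin

lemma compact_X: "compact X"
  and X_nonempty: "X \<noteq> {}"
  and continuous_on_act: "continuous_on X (act g)"
  and act_in_X: "x \<in> X \<Longrightarrow> act g x \<in> X"
  and act_add: "x \<in> X \<Longrightarrow> act (g + h) x = act g (act h x)"
  using G_system unfolding G_system_def by auto

lemma continuous_on_act_comp: "continuous_on X f \<Longrightarrow> continuous_on X (\<lambda>x. f (act g x))"
  by (rule continuous_on_compose2[OF _ continuous_on_act]) (auto simp: act_in_X)

lemma continuous_on_SF: "continuous_on X f \<Longrightarrow> continuous_on X (SF act F f)"
  unfolding SF_def[abs_def] by (intro continuous_on_sum continuous_on_act_comp)

lemma measurable_act:
  assumes "sets M = sets (restrict_space borel X)"
  shows "act g \<in> M \<rightarrow>\<^sub>M M"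
proof -
  have "act g \<in> restrict_space borel X \<rightarrow>\<^sub>M restrict_space borel X"
    using borel_measurable_continuous_on_restrict[OF continuous_on_act]
    by (auto simp: measurable_restrict_space2_iff space_restrict_space act_in_X)
  then show ?thesis
    using measurable_cong_sets[OF assms assms] by blast
qed

lemma SF_translate_diff_bound:
  assumes "finite F" and bound: "\<And>x. x \<in> X \<Longrightarrow> \<bar>f x\<bar> \<le> B" and "x \<in> X"
  shows "\<bar>SF act F (\<lambda>y. f (act g y)) x - SF act F f x\<bar> \<le> B * card (sym_diff ((\<lambda>h. g + h) ` F) F)"
proof -
  have "SF act F (\<lambda>y. f (act g y)) x = (\<Sum>h\<in>F. f (act (g + h) x))"
    unfolding SF_def using \<open>x \<in> X\<close> by (simp add: act_add)
  also have "\<dots> = (\<Sum>k\<in>(\<lambda>h. g + h) ` F. f (act k x))"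
    by (simp add: sum.reindex)
  finally show ?thesis
    unfolding SF_def using assms by (auto intro!: abs_sum_diff_le_card_sym_diff act_in_X)
qed

definition separated_set :: "'g set \<Rightarrow> real \<Rightarrow> 'x set \<Rightarrow> bool" where
  "separated_set F eps E \<longleftrightarrow> finite E \<and> E \<subseteq> X \<and> (\<forall>x\<in>E. \<forall>y\<in>E. x \<noteq> y \<longrightarrow> dF act F x y > eps)"

lemma PF_eq_Sup: "PF act X f F eps = Sup {(\<Sum>x\<in>E. exp (SF act F f x)) | E. separated_set F eps E}"
  unfolding PF_def separated_set_def by simp

lemma separated_set_dist_ge:
  assumes "finite F" "F \<noteq> {}" "eps > 0"
  obtains \<delta> where "\<delta> > 0"
    and "\<And>E y z. separated_set F eps E \<Longrightarrow> y \<in> E \<Longrightarrow> z \<in> E \<Longrightarrow> y \<noteq> z \<Longrightarrow> \<delta> \<le> dist z y"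
proof -
  have "\<forall>g\<in>F. \<exists>d>0. \<forall>x\<in>X. \<forall>y\<in>X. dist y x < d \<longrightarrow> dist (act g y) (act g x) < eps"
    using compact_uniformly_continuous[OF continuous_on_act compact_X] \<open>eps > 0\<close>
    unfolding uniformly_continuous_on_def by blast
  then obtain d where d_pos: "\<And>g. g \<in> F \<Longrightarrow> d g > 0"
    and d: "\<And>g x y. g \<in> F \<Longrightarrow> x \<in> X \<Longrightarrow> y \<in> X \<Longrightarrow> dist y x < d g \<Longrightarrow> dist (act g y) (act g x) < eps"
    by metis
  define \<delta> where "\<delta> = Min (d ` F)"
  have "\<delta> > 0" and \<delta>_le: "\<And>g. g \<in> F \<Longrightarrow> \<delta> \<le> d g"
    using assms(1,2) d_pos by (auto simp: \<delta>_def)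
  moreover have "\<delta> \<le> dist z y"
    if E: "separated_set F eps E" and yz: "y \<in> E" "z \<in> E" "y \<noteq> z" for E y z
  proof (rule ccontr)
    assume "\<not> \<delta> \<le> dist z y"
    from E yz have "y \<in> X" "z \<in> X" "dF act F z y > eps"
      by (auto simp: separated_set_def)
    have "dist (act g z) (act g y) < eps" if "g \<in> F" for g
      using d[OF that \<open>y \<in> X\<close> \<open>z \<in> X\<close>] \<delta>_le[OF that] \<open>\<not> \<delta> \<le> dist z y\<close> by simp
    then have "dF act F z y < eps"
      unfolding dF_def using assms(1,2) by simp
    with \<open>dF act F z y > eps\<close> show False by simp
  qed
  ultimately show ?thesis
    using that by blast
qed

lemma separated_set_card_bounded:
  assumes "finite F" "F \<noteq> {}" "eps > 0"
  obtains N where "\<And>E. separated_set F eps E \<Longrightarrow> card E \<le> N"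
proof -
  obtain \<delta> where "\<delta> > 0"
    and \<delta>: "\<And>E y z. separated_set F eps E \<Longrightarrow> y \<in> E \<Longrightarrow> z \<in> E \<Longrightarrow> y \<noteq> z \<Longrightarrow> \<delta> \<le> dist z y"
    using separated_set_dist_ge[OF assms] by blast
  then obtain K where K: "finite K" "X \<subseteq> (\<Union>c\<in>K. ball c (\<delta> / 2))"
    using compact_X unfolding compact_eq_totally_bounded by (meson half_gt_zero)
  then have "\<forall>y\<in>X. \<exists>c\<in>K. dist c y < \<delta> / 2"
    by (auto simp: subset_eq)
  then obtain c where c: "\<And>y. y \<in> X \<Longrightarrow> c y \<in> K" "\<And>y. y \<in> X \<Longrightarrow> dist (c y) y < \<delta> / 2"
    by metis
  have "card E \<le> card K" if E: "separated_set F eps E" for E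
  proof -
    have "E \<subseteq> X"
      using E by (simp add: separated_set_def)
    have "inj_on c E"
    proof (rule inj_onI, rule ccontr)
      fix y z assume yz: "y \<in> E" "z \<in> E" "c y = c z" "y \<noteq> z"
      with \<open>E \<subseteq> X\<close> have "y \<in> X" "z \<in> X" by auto
      have "dist z y \<le> dist (c z) z + dist (c y) y"
        using dist_triangle[of z y "c y"] yz(3) by (simp add: dist_commute)
      also have "\<dots> < \<delta>"
        using c(2)[OF \<open>y \<in> X\<close>] c(2)[OF \<open>z \<in> X\<close>] by linarith
      finally show False
        using \<delta>[OF E yz(1,2,4)] by simp
    qed
    moreover have "c ` E \<subseteq> K"
      using c(1) \<open>E \<subseteq> X\<close> by auto
    ultimately show ?thesis
      using card_inj_on_le K(1) by blast
  qed
  then show ?thesis by (rule that)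
qed

lemma
  fixes u :: "'x \<Rightarrow> real"
  assumes "finite F" "F \<noteq> {}" "eps > 0" "continuous_on X u"
  shows bdd_above_separated_sums: "bdd_above {(\<Sum>x\<in>E. exp (SF act F u x)) | E. separated_set F eps E}"
    and exp_SF_le_PF: "x \<in> X \<Longrightarrow> exp (SF act F u x) \<le> PF act X u F eps"
proof -
  obtain N where N: "\<And>E. separated_set F eps E \<Longrightarrow> card E \<le> N"
    using separated_set_card_bounded[OF assms(1-3)] by blast
  obtain B where B: "\<And>x. x \<in> X \<Longrightarrow> \<bar>SF act F u x\<bar> \<le> B"
    using continuous_on_compact_bound[OF compact_X continuous_on_SF[OF assms(4), of F]] by auto
  have "(\<Sum>x\<in>E. exp (SF act F u x)) \<le> N * exp B" if E: "separated_set F eps E" for E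
  proof -
    have "(\<Sum>x\<in>E. exp (SF act F u x)) \<le> card E * exp B"
      using E B by (intro sum_bounded_above) (auto simp: separated_set_def abs_le_iff)
    also have "\<dots> \<le> N * exp B"
      using N[OF E] by simp
    finally show ?thesis .
  qed
  then show bdd: "bdd_above {(\<Sum>x\<in>E. exp (SF act F u x)) | E. separated_set F eps E}"
    by (intro bdd_aboveI[of _ "N * exp B"]) auto
  assume "x \<in> X"
  then have "separated_set F eps {x}"
    by (simp add: separated_set_def)
  then show "exp (SF act F u x) \<le> PF act X u F eps"
    unfolding PF_eq_Sup by (intro cSup_upper[OF _ bdd]) force
qed

lemma PF_pos:
  assumes "finite F" "F \<noteq> {}" "eps > 0" "continuous_on X u"
  shows "PF act X u F eps > 0"
proof -
  obtain x where "x \<in> X" using X_nonempty by blast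
  from exp_SF_le_PF[OF assms this] show ?thesis
    using exp_gt_zero[of "SF act F u x"] by linarith
qed

lemma PF_le_exp_mult:
  assumes "finite F" "F \<noteq> {}" "eps > 0" "continuous_on X u" "continuous_on X v"
    and le: "\<And>x. x \<in> X \<Longrightarrow> SF act F u x \<le> SF act F v x + c"
  shows "PF act X u F eps \<le> exp c * PF act X v F eps"
  unfolding PF_eq_Sup[of u]
proof (rule cSup_least)
  have "separated_set F eps {}"
    by (simp add: separated_set_def)
  then show "{(\<Sum>x\<in>E. exp (SF act F u x)) | E. separated_set F eps E} \<noteq> {}"
    by blast
next
  fix s assume "s \<in> {(\<Sum>x\<in>E. exp (SF act F u x)) | E. separated_set F eps E}"
  then obtain E where E: "separated_set F eps E" and s: "s = (\<Sum>x\<in>E. exp (SF act F u x))"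
    by blast
  have "s \<le> (\<Sum>x\<in>E. exp c * exp (SF act F v x))"
    unfolding s using E le by (intro sum_mono) (auto simp: separated_set_def add.commute simp flip: exp_add)
  also have "\<dots> = exp c * (\<Sum>x\<in>E. exp (SF act F v x))"
    by (simp add: sum_distrib_left)
  also have "(\<Sum>x\<in>E. exp (SF act F v x)) \<le> PF act X v F eps"
    unfolding PF_eq_Sup using E by (intro cSup_upper bdd_above_separated_sums assms(1-3,5)) blast
  finally show "s \<le> exp c * PF act X v F eps"
    by simp
qed

end

locale amenable_system = dynamical_system act X
  for act :: "'g::group_add \<Rightarrow> 'x::metric_space \<Rightarrow> 'x" and X +
  fixes Fs :: "nat \<Rightarrow> 'g set"
  assumes Folner: "Folner_seq Fs"
begin

lemma finite_Fs: "finite (Fs n)" and Fs_nonempty: "Fs n \<noteq> {}"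
  using Folner unfolding Folner_seq_def by auto

lemma card_Fs_pos: "real (card (Fs n)) > 0"
  using finite_Fs Fs_nonempty by (simp add: card_gt_0_iff)

lemma pressure_le_add:
  assumes "eps > 0" "continuous_on X u" "continuous_on X v"
    and le: "\<And>n x. x \<in> X \<Longrightarrow> SF act (Fs n) u x \<le> SF act (Fs n) v x + c n"
    and lim: "(\<lambda>n. c n / card (Fs n)) \<longlonglongrightarrow> a"
  shows "pressure act X u Fs eps \<le> pressure act X v Fs eps + ereal a"
proof -
  let ?p = "\<lambda>w n. ln (PF act X w (Fs n) eps) / card (Fs n)"
  have "?p u n \<le> c n / card (Fs n) + ?p v n" for n
  proof -
    have PF_pos: "PF act X w (Fs n) eps > 0" if "continuous_on X w" for w
      using PF_pos[OF finite_Fs Fs_nonempty \<open>eps > 0\<close> that] .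
    have "ln (PF act X u (Fs n) eps) \<le> ln (exp (c n) * PF act X v (Fs n) eps)"
      using PF_le_exp_mult[OF finite_Fs Fs_nonempty assms(1-3) le] PF_pos assms(2,3) by simp
    also have "\<dots> = c n + ln (PF act X v (Fs n) eps)"
      using PF_pos[OF assms(3)] by (simp add: ln_mult)
    finally show ?thesis
      using card_Fs_pos[of n] by (simp add: divide_right_mono flip: add_divide_distrib)
  qed
  then have "pressure act X u Fs eps \<le> limsup (\<lambda>n. ereal (c n / card (Fs n)) + ereal (?p v n))"
    unfolding pressure_def by (intro Limsup_mono always_eventually) simp
  also have "\<dots> = ereal a + pressure act X v Fs eps"
    unfolding pressure_def by (rule ereal_limsup_lim_add) (use lim in auto)
  finally show ?thesis
    by (simp add: add.commute)
qed

lemma pressure_ge: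
  fixes a :: real
  assumes "eps > 0" "continuous_on X u"
    and ex: "\<And>n. \<exists>x\<in>X. card (Fs n) * a \<le> SF act (Fs n) u x"
  shows "ereal a \<le> pressure act X u Fs eps"
  unfolding pressure_def
proof (intro le_Limsup always_eventually allI)
  fix n
  obtain x where x: "x \<in> X" "card (Fs n) * a \<le> SF act (Fs n) u x"
    using ex by blast
  have "SF act (Fs n) u x \<le> ln (PF act X u (Fs n) eps)"
    using exp_SF_le_PF[OF finite_Fs Fs_nonempty assms(1,2) x(1)]
      PF_pos[OF finite_Fs Fs_nonempty assms(1,2)] by (simp add: ln_ge_iff)
  then show "ereal a \<le> ereal (ln (PF act X u (Fs n) eps) / card (Fs n))"
    using x(2) card_Fs_pos[of n] by (simp add: le_divide_eq mult.commute)
qed simp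

lemma mdim_upper_le_SF:
  assumes u: "continuous_on X u" and le: "\<And>n x. x \<in> X \<Longrightarrow> SF act (Fs n) u x \<le> c n"
    and lim: "(\<lambda>n. c n / card (Fs n)) \<longlonglongrightarrow> a"
  shows "mdim_upper act X Fs u \<le> mdim_upper act X Fs (\<lambda>_. 0) + ereal a"
proof -
  let ?q = "\<lambda>w eps. pressure act X (\<lambda>x. w x * ln (1 / eps)) Fs eps / ereal (ln (1 / eps))"
  have "?q u eps \<le> ?q (\<lambda>_. 0) eps + ereal a" if "0 < eps \<and> eps < 1" for eps
  proof -
    define L where "L = ln (1 / eps)"
    have "L > 0"
      using that by (simp add: L_def)
    have "pressure act X (\<lambda>x. u x * L) Fs eps \<le> pressure act X (\<lambda>x. 0 * L) Fs eps + ereal (a * L)"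
    proof (rule pressure_le_add)
      show "continuous_on X (\<lambda>x. u x * L)"
        using u by (intro continuous_intros)
      show "SF act (Fs n) (\<lambda>x. u x * L) x \<le> SF act (Fs n) (\<lambda>x. 0 * L) x + c n * L" if "x \<in> X" for n x
        using le[OF that] \<open>L > 0\<close> by (simp add: SF_mult_right)
      show "(\<lambda>n. c n * L / card (Fs n)) \<longlonglongrightarrow> a * L"
        using tendsto_mult_right[OF lim, of L] by (simp add: mult.commute)
    qed (use that in simp_all)
    then have "pressure act X (\<lambda>x. u x * L) Fs eps / ereal L \<le>
        (pressure act X (\<lambda>x. 0 * L) Fs eps + ereal (a * L)) / ereal L"
      using \<open>L > 0\<close> by (intro ereal_divide_right_mono) auto
    then show ?thesis
      using \<open>L > 0\<close> by (simp add: L_def ereal_add_divide_real)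
  qed
  then have "mdim_upper act X Fs u \<le> Limsup (at_right 0) (\<lambda>eps. ?q (\<lambda>_. 0) eps + ereal a)"
    unfolding mdim_upper_def by (intro Limsup_mono eventually_mono[OF eventually_at_right_0_lt_1])
  also have "\<dots> = mdim_upper act X Fs (\<lambda>_. 0) + ereal a"
    unfolding mdim_upper_def by (rule Limsup_add_ereal_right) auto
  finally show ?thesis .
qed

lemma mdim_lower_ge_SF:
  fixes a :: real
  assumes u: "continuous_on X u" and ex: "\<And>n. \<exists>x\<in>X. card (Fs n) * a \<le> SF act (Fs n) u x"
  shows "ereal a \<le> mdim_lower act X Fs u"
  unfolding mdim_lower_def
proof (rule Liminf_bounded, rule eventually_mono[OF eventually_at_right_0_lt_1])
  fix eps :: real assume "0 < eps \<and> eps < 1"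
  define L where "L = ln (1 / eps)"
  have "L > 0"
    using \<open>0 < eps \<and> eps < 1\<close> by (simp add: L_def)
  have "ereal (a * L) \<le> pressure act X (\<lambda>x. u x * L) Fs eps"
  proof (rule pressure_ge)
    show "continuous_on X (\<lambda>x. u x * L)"
      using u by (intro continuous_intros)
    show "\<exists>x\<in>X. card (Fs n) * (a * L) \<le> SF act (Fs n) (\<lambda>x. u x * L) x" for n
      using ex[of n] \<open>L > 0\<close> by (auto simp: SF_mult_right mult.assoc[symmetric])
  qed (use \<open>0 < eps \<and> eps < 1\<close> in simp)
  then have "ereal (a * L) / ereal L \<le> pressure act X (\<lambda>x. u x * L) Fs eps / ereal L"
    using \<open>L > 0\<close> by (intro ereal_divide_right_mono) auto
  then show "ereal a \<le> pressure act X (\<lambda>x. u x * ln (1 / eps)) Fs eps / ereal (ln (1 / eps))"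
    using \<open>L > 0\<close> by (simp add: L_def)
qed

lemma SF_translate_diff_growth:
  assumes "continuous_on X f"
  obtains c where "\<And>n x. x \<in> X \<Longrightarrow> \<bar>SF act (Fs n) (\<lambda>y. f (act g y) - f y) x\<bar> \<le> c n"
    and "(\<lambda>n. c n / card (Fs n)) \<longlonglongrightarrow> 0"
proof -
  obtain B where B: "\<And>x. x \<in> X \<Longrightarrow> \<bar>f x\<bar> \<le> B"
    using continuous_on_compact_bound[OF compact_X assms] by auto
  define c where "c n = B * card (sym_diff ((\<lambda>h. g + h) ` Fs n) (Fs n))" for n
  have "(\<lambda>n. card (sym_diff ((\<lambda>h. g + h) ` Fs n) (Fs n)) / card (Fs n)) \<longlonglongrightarrow> 0"
    using Folner unfolding Folner_seq_def by blast
  from tendsto_mult_right_zero[OF this, of B] have "(\<lambda>n. c n / card (Fs n)) \<longlonglongrightarrow> 0"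
    by (simp add: c_def)
  moreover have "\<bar>SF act (Fs n) (\<lambda>y. f (act g y) - f y) x\<bar> \<le> c n" if "x \<in> X" for n x
    unfolding SF_diff c_def using SF_translate_diff_bound[OF finite_Fs B that] .
  ultimately show ?thesis
    using that by blast
qed

end

section \<open>Invariant probability measures as functionals\<close>

lemma signed_integral_mult_right:
  "signed_integral Mp Mn (\<lambda>x. f x * c) = signed_integral Mp Mn f * c"
  unfolding signed_integral_def by (simp add: left_diff_distrib)

locale signed_measure_system = dynamical_system act X
  for act :: "'g::group_add \<Rightarrow> 'x::metric_space \<Rightarrow> 'x" and X +
  fixes Mp Mn :: "'x measure"
  assumes Mp: "finite_borel_on X Mp" and Mn: "finite_borel_on X Mn"
begin

lemma finite_Mp: "finite_measure Mp" and sets_Mp: "sets Mp = sets (restrict_space borel X)"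
  and finite_Mn: "finite_measure Mn" and sets_Mn: "sets Mn = sets (restrict_space borel X)"
  using Mp Mn unfolding finite_borel_on_def by auto

lemma space_Mp: "space Mp = X" and space_Mn: "space Mn = X"
  using sets_eq_imp_space_eq[OF sets_Mp] sets_eq_imp_space_eq[OF sets_Mn]
  by (simp_all add: space_restrict_space)

lemma
  fixes f :: "'x \<Rightarrow> real"
  shows integrable_Mp: "continuous_on X f \<Longrightarrow> integrable Mp f"
  and integrable_Mn: "continuous_on X f \<Longrightarrow> integrable Mn f"
  using integrable_continuous_on_compact[OF finite_Mp sets_Mp compact_X]
    integrable_continuous_on_compact[OF finite_Mn sets_Mn compact_X] by auto

lemma signed_integral_diff:
  assumes "continuous_on X f" "continuous_on X h"
  shows "signed_integral Mp Mn (\<lambda>x. f x - h x) = signed_integral Mp Mn f - signed_integral Mp Mn h"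
  unfolding signed_integral_def using assms by (simp add: integrable_Mp integrable_Mn)

lemma signed_integral_sum:
  assumes "\<And>i. i \<in> I \<Longrightarrow> continuous_on X (f i)"
  shows "signed_integral Mp Mn (\<lambda>x. \<Sum>i\<in>I. f i x) = (\<Sum>i\<in>I. signed_integral Mp Mn (f i))"
  unfolding signed_integral_def using assms
  by (simp add: integrable_Mp integrable_Mn sum_subtractf)

(* Invariance gives Mn <= Mp setwise, so Mp - Mn is a genuine measure. *)
lemma
  assumes "invariant_prob act X Mp Mn"
  defines "\<nu> \<equiv> diff_measure Mp Mn"
  shows finite_measure_diff_measure: "finite_measure \<nu>"
    and emeasure_diff_measure_eq_signed_val: "A \<in> sets \<nu> \<Longrightarrow> emeasure \<nu> A = ennreal (signed_val Mp Mn A)"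
    and signed_integral_eq_integral_diff_measure: "continuous_on X f \<Longrightarrow> signed_integral Mp Mn f = integral\<^sup>L \<nu> f"
proof -
  interpret Mp: finite_measure Mp by (rule finite_Mp)
  interpret Mn: finite_measure Mn by (rule finite_Mn)
  have nonneg: "signed_val Mp Mn A \<ge> 0" if "A \<in> sets Mp" for A
    using assms(1) that sets_Mp unfolding invariant_prob_def by auto
  have sets_\<nu>: "sets \<nu> = sets (restrict_space borel X)"
    by (simp add: \<nu>_def sets_Mp)
  have emeasure_\<nu>: "emeasure \<nu> A = emeasure Mp A - emeasure Mn A" if "A \<in> sets \<nu>" for A
    unfolding \<nu>_def using that nonneg
    by (intro emeasure_diff_measure finite_Mp finite_Mn)
      (auto simp: sets_\<nu> sets_Mp sets_Mn signed_val_def Mp.emeasure_eq_measure Mn.emeasure_eq_measure)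
  show emeasure: "emeasure \<nu> A = ennreal (signed_val Mp Mn A)" if "A \<in> sets \<nu>" for A
    using emeasure_\<nu>[OF that] that nonneg
    by (simp add: signed_val_def Mp.emeasure_eq_measure Mn.emeasure_eq_measure ennreal_minus sets_\<nu> sets_Mp)
  have "X \<in> sets \<nu>"
    using sets.top[of \<nu>] by (simp add: \<nu>_def space_Mp)
  show finite: "finite_measure \<nu>"
    by (rule finite_measureI) (use emeasure[OF \<open>X \<in> sets \<nu>\<close>] in \<open>simp add: \<nu>_def space_Mp\<close>)
  show "signed_integral Mp Mn f = integral\<^sup>L \<nu> f" if "continuous_on X f" for f
  proof -
    have "integral\<^sup>L Mp f = integral\<^sup>L \<nu> f + integral\<^sup>L Mn f"
    proof (rule integral_add_measures)
      show "sets \<nu> = sets Mp" "sets Mn = sets Mp"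
        by (simp_all add: sets_\<nu> sets_Mp sets_Mn)
      show "emeasure Mp A = emeasure \<nu> A + emeasure Mn A" if "A \<in> sets Mp" for A
        using emeasure[of A] that nonneg[OF that] sets_\<nu> sets_Mp
        by (simp add: signed_val_def Mp.emeasure_eq_measure Mn.emeasure_eq_measure flip: ennreal_plus)
      show "integrable \<nu> f" "integrable Mn f"
        using integrable_continuous_on_compact[OF finite sets_\<nu> compact_X that] integrable_Mn[OF that] by auto
    qed
    then show ?thesis
      unfolding signed_integral_def by simp
  qed
qed

lemma distr_diff_measure_act:
  assumes "invariant_prob act X Mp Mn"
  shows "distr (diff_measure Mp Mn) (diff_measure Mp Mn) (act g) = diff_measure Mp Mn"
proof (rule measure_eqI)
  let ?\<nu> = "diff_measure Mp Mn"
  have act: "act g \<in> ?\<nu> \<rightarrow>\<^sub>M ?\<nu>"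
    by (simp add: measurable_act sets_Mp)
  fix A assume "A \<in> sets (distr ?\<nu> ?\<nu> (act g))"
  then have A: "A \<in> sets ?\<nu>" by simp
  then have "act g -` A \<inter> X \<in> sets ?\<nu>"
    using measurable_sets[OF act A] by (simp add: space_Mp)
  with A show "emeasure (distr ?\<nu> ?\<nu> (act g)) A = emeasure ?\<nu> A"
    using assms emeasure_distr[OF act A] emeasure_diff_measure_eq_signed_val[OF assms] sets_Mp
    by (simp add: space_Mp invariant_prob_def)
qed simp

lemma
  assumes "invariant_prob act X Mp Mn"
  shows signed_integral_one_if_invariant: "signed_integral Mp Mn (\<lambda>_. 1) = 1"
    and signed_integral_nonneg_if_invariant:
      "continuous_on X f \<Longrightarrow> (\<And>x. x \<in> X \<Longrightarrow> 0 \<le> f x) \<Longrightarrow> 0 \<le> signed_integral Mp Mn f"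
    and signed_integral_act_if_invariant:
      "continuous_on X f \<Longrightarrow> signed_integral Mp Mn (\<lambda>x. f (act g x)) = signed_integral Mp Mn f"
proof -
  let ?\<nu> = "diff_measure Mp Mn"
  interpret \<nu>: finite_measure ?\<nu>
    by (rule finite_measure_diff_measure[OF assms])
  note emeasure_\<nu> = emeasure_diff_measure_eq_signed_val[OF assms]
  have sets_\<nu>: "sets ?\<nu> = sets (restrict_space borel X)"
    by (simp add: sets_Mp)
  have "X \<in> sets ?\<nu>"
    using sets.top[of ?\<nu>] by (simp add: space_Mp)
  then have "emeasure ?\<nu> X = 1"
    using emeasure_\<nu> assms by (simp add: invariant_prob_def)
  then have "measure ?\<nu> X = 1"
    by (simp add: measure_def)
  then show "signed_integral Mp Mn (\<lambda>_. 1) = 1"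
    by (simp add: signed_integral_eq_integral_diff_measure[OF assms] space_Mp)
  show "0 \<le> signed_integral Mp Mn f" if "continuous_on X f" "\<And>x. x \<in> X \<Longrightarrow> 0 \<le> f x" for f
  proof -
    have "0 \<le> integral\<^sup>L ?\<nu> f"
      by (intro integral_nonneg_AE AE_I2) (use that(2) in \<open>simp add: space_Mp\<close>)
    with that(1) show ?thesis
      by (simp add: signed_integral_eq_integral_diff_measure[OF assms])
  qed
  assume f: "continuous_on X f"
  have act: "act g \<in> ?\<nu> \<rightarrow>\<^sub>M ?\<nu>"
    by (rule measurable_act[OF sets_\<nu>])
  have "distr ?\<nu> ?\<nu> (act g) = ?\<nu>"
    by (rule distr_diff_measure_act[OF assms])
  moreover have "integral\<^sup>L (distr ?\<nu> ?\<nu> (act g)) f = integral\<^sup>L ?\<nu> (\<lambda>x. f (act g x))"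
    using f measurable_cong_sets[OF sets_\<nu> refl] borel_measurable_continuous_on_restrict[OF f]
    by (intro integral_distr act) blast
  ultimately show "signed_integral Mp Mn (\<lambda>x. f (act g x)) = signed_integral Mp Mn f"
    using f continuous_on_act_comp[OF f]
    by (simp add: signed_integral_eq_integral_diff_measure[OF assms])
qed

lemma signed_val_nonneg_if_signed_integral_nonneg:
  assumes nonneg: "\<And>f. continuous_on X f \<Longrightarrow> (\<And>x. x \<in> X \<Longrightarrow> 0 \<le> f x) \<Longrightarrow> 0 \<le> signed_integral Mp Mn f"
    and A: "A \<in> sets (restrict_space borel X)"
  shows "signed_val Mp Mn A \<ge> 0"
proof -
  have "measure Mn A + measure Mn A \<le> measure Mp A + measure Mn A"
  proof (rule measure_le_if_integral_le[OF finite_Mn finite_Mn finite_Mp finite_Mn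
        sets_Mn sets_Mn sets_Mp sets_Mn compact_imp_closed[OF compact_X] _ A])
    fix f :: "'x \<Rightarrow> real"
    assume "continuous_on X f" "\<And>x. x \<in> X \<Longrightarrow> 0 \<le> f x \<and> f x \<le> 1"
    then have "0 \<le> signed_integral Mp Mn f"
      using nonneg by blast
    then show "integral\<^sup>L Mn f + integral\<^sup>L Mn f \<le> integral\<^sup>L Mp f + integral\<^sup>L Mn f"
      by (simp add: signed_integral_def)
  qed
  then show ?thesis
    by (simp add: signed_val_def)
qed

lemma signed_val_act_if_signed_integral_act:
  assumes act: "\<And>f. continuous_on X f \<Longrightarrow> signed_integral Mp Mn (\<lambda>x. f (act g x)) = signed_integral Mp Mn f"
    and A: "A \<in> sets (restrict_space borel X)"
  shows "signed_val Mp Mn (act g -` A \<inter> X) = signed_val Mp Mn A"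
proof -
  have act_Mp: "act g \<in> Mp \<rightarrow>\<^sub>M Mp" and act_Mn: "act g \<in> Mn \<rightarrow>\<^sub>M Mn"
    by (simp_all add: measurable_act sets_Mp sets_Mn)
  define Mpg where "Mpg = distr Mp Mp (act g)"
  define Mng where "Mng = distr Mn Mn (act g)"
  have finite_g: "finite_measure Mpg" "finite_measure Mng"
    unfolding Mpg_def Mng_def
    by (intro finite_measure.finite_measure_distr finite_Mp finite_Mn act_Mp act_Mn)+
  have sets_g: "sets Mpg = sets (restrict_space borel X)" "sets Mng = sets (restrict_space borel X)"
    by (simp_all add: Mpg_def Mng_def sets_Mp sets_Mn)
  have "integral\<^sup>L Mp f + integral\<^sup>L Mng f = integral\<^sup>L Mn f + integral\<^sup>L Mpg f"
    if f: "continuous_on X f" for f :: "'x \<Rightarrow> real"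
  proof -
    have "integral\<^sup>L Mpg f = integral\<^sup>L Mp (\<lambda>x. f (act g x))"
      "integral\<^sup>L Mng f = integral\<^sup>L Mn (\<lambda>x. f (act g x))"
      unfolding Mpg_def Mng_def
      using borel_measurable_continuous_on_restrict[OF f] act_Mp act_Mn
        measurable_cong_sets[OF sets_Mp refl] measurable_cong_sets[OF sets_Mn refl]
      by (auto intro!: integral_distr)
    with act[OF f] show ?thesis
      by (simp add: signed_integral_def)
  qed
  then have "measure Mp A + measure Mng A \<le> measure Mn A + measure Mpg A"
    and "measure Mn A + measure Mpg A \<le> measure Mp A + measure Mng A"
    using measure_le_if_integral_le[OF finite_Mp finite_g(2) finite_Mn finite_g(1)
        sets_Mp sets_g(2) sets_Mn sets_g(1) compact_imp_closed[OF compact_X] _ A]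
      measure_le_if_integral_le[OF finite_Mn finite_g(1) finite_Mp finite_g(2)
        sets_Mn sets_g(1) sets_Mp sets_g(2) compact_imp_closed[OF compact_X] _ A]
    by auto
  moreover have "measure Mpg A = measure Mp (act g -` A \<inter> X)" "measure Mng A = measure Mn (act g -` A \<inter> X)"
    using A measure_distr[OF act_Mp] measure_distr[OF act_Mn]
    by (simp_all add: Mpg_def Mng_def space_Mp space_Mn sets_Mp sets_Mn)
  ultimately show ?thesis
    by (simp add: signed_val_def)
qed

lemma invariant_prob_if_signed_integral:
  assumes "signed_integral Mp Mn (\<lambda>_. 1) = 1"
    and "\<And>f. continuous_on X f \<Longrightarrow> (\<And>x. x \<in> X \<Longrightarrow> 0 \<le> f x) \<Longrightarrow> 0 \<le> signed_integral Mp Mn f"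
    and "\<And>f g. continuous_on X f \<Longrightarrow> signed_integral Mp Mn (\<lambda>x. f (act g x)) = signed_integral Mp Mn f"
  shows "invariant_prob act X Mp Mn"
  unfolding invariant_prob_def
  using assms signed_val_nonneg_if_signed_integral_nonneg signed_val_act_if_signed_integral_act
  by (simp add: signed_integral_def signed_val_def space_Mp space_Mn)

end

lemma le_if_scaled_le_add_scaled:
  fixes x y D :: real
  assumes "\<And>t. t > 0 \<Longrightarrow> t * x \<le> D + t * y"
  shows "x \<le> y"
proof (rule ccontr)
  assume "\<not> x \<le> y"
  define t where "t = (\<bar>D\<bar> + 1) / (x - y)"
  have "t > 0" and "t * (x - y) = \<bar>D\<bar> + 1"
    using \<open>\<not> x \<le> y\<close> by (simp_all add: t_def)
  moreover have "t * (x - y) \<le> D"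
    using assms[OF \<open>t > 0\<close>] by (simp add: right_diff_distrib)
  ultimately show False
    by linarith
qed

locale amenable_signed_measure_system = amenable_system + signed_measure_system
begin

lemma signed_integral_le_mdim_lower_if_invariant:
  assumes invariant: "invariant_prob act X Mp Mn" and f: "continuous_on X f"
  shows "ereal (signed_integral Mp Mn f) \<le> mdim_lower act X Fs f"
proof (rule mdim_lower_ge_SF[OF f])
  fix n
  let ?S = "SF act (Fs n) f"
  obtain x where x: "x \<in> X" "\<And>y. y \<in> X \<Longrightarrow> ?S y \<le> ?S x"
    using continuous_attains_sup[OF compact_X X_nonempty continuous_on_SF[OF f]] by blast
  have "card (Fs n) * signed_integral Mp Mn f = signed_integral Mp Mn ?S"
    using signed_integral_sum[of "Fs n" "\<lambda>g y. f (act g y)"] continuous_on_act_comp[OF f]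
    by (simp add: SF_def[abs_def] signed_integral_act_if_invariant[OF invariant f])
  also have "\<dots> \<le> ?S x"
  proof -
    have "0 \<le> signed_integral Mp Mn (\<lambda>y. ?S x - ?S y)"
      using x by (intro signed_integral_nonneg_if_invariant[OF invariant] continuous_intros continuous_on_SF f) auto
    also have "\<dots> = ?S x - signed_integral Mp Mn ?S"
      using signed_integral_diff[of "\<lambda>_. ?S x" ?S] signed_integral_mult_right[of Mp Mn "\<lambda>_. 1" "?S x"]
      by (simp add: signed_integral_one_if_invariant[OF invariant] continuous_on_SF[OF f])
    finally show ?thesis by simp
  qed
  finally show "\<exists>x\<in>X. card (Fs n) * signed_integral Mp Mn f \<le> ?S x"
    using x(1) by blast
qed

(* Applied to t u for t > 0, the hypothesis gives t * int u <= D + t a; let t -> oo. *)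
lemma signed_integral_le_SF_growth:
  assumes D: "mdim_upper act X Fs (\<lambda>_. 0) = ereal D"
    and upper: "\<forall>f. continuous_on X f \<longrightarrow> ereal (signed_integral Mp Mn f) \<le> mdim_upper act X Fs f"
    and u: "continuous_on X u" and le: "\<And>n x. x \<in> X \<Longrightarrow> SF act (Fs n) u x \<le> c n"
    and lim: "(\<lambda>n. c n / card (Fs n)) \<longlonglongrightarrow> a"
  shows "signed_integral Mp Mn u \<le> a"
proof (rule le_if_scaled_le_add_scaled)
  fix t :: real assume "t > 0"
  have "ereal (signed_integral Mp Mn (\<lambda>x. u x * t)) \<le> mdim_upper act X Fs (\<lambda>x. u x * t)"
    using u by (intro upper[rule_format] continuous_intros)
  also have "\<dots> \<le> ereal D + ereal (a * t)"
    unfolding D[symmetric]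
  proof (rule mdim_upper_le_SF)
    show "continuous_on X (\<lambda>x. u x * t)"
      using u by (intro continuous_intros)
    show "SF act (Fs n) (\<lambda>x. u x * t) x \<le> c n * t" if "x \<in> X" for n x
      using le[OF that] \<open>t > 0\<close> by (simp add: SF_mult_right)
    show "(\<lambda>n. c n * t / card (Fs n)) \<longlonglongrightarrow> a * t"
      using tendsto_mult_right[OF lim, of t] by (simp add: mult.commute)
  qed
  finally have "signed_integral Mp Mn (\<lambda>x. u x * t) \<le> D + a * t"
    by simp
  then show "t * signed_integral Mp Mn u \<le> D + t * a"
    unfolding signed_integral_mult_right by (simp add: mult.commute)
qed

lemma invariant_prob_if_signed_integral_le_mdim_upper:
  assumes D: "mdim_upper act X Fs (\<lambda>_. 0) = ereal D"
    and upper: "\<forall>f. continuous_on X f \<longrightarrow> ereal (signed_integral Mp Mn f) \<le> mdim_upper act X Fs f"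
  shows "invariant_prob act X Mp Mn"
proof (rule invariant_prob_if_signed_integral)
  note growth = signed_integral_le_SF_growth[OF D upper]
  have const: "signed_integral Mp Mn (\<lambda>_. c) \<le> c" for c
  proof (rule growth[where c = "\<lambda>n. card (Fs n) * c"])
    have "(\<lambda>n. card (Fs n) * c / card (Fs n)) = (\<lambda>n. c)"
      using card_Fs_pos by (simp add: fun_eq_iff)
    then show "(\<lambda>n. card (Fs n) * c / card (Fs n)) \<longlonglongrightarrow> c"
      by simp
  qed (simp_all add: SF_def)
  show "signed_integral Mp Mn (\<lambda>_. 1) = 1"
    using const[of 1] const[of "-1"] signed_integral_mult_right[of Mp Mn "\<lambda>_. 1" "-1"] by simp
  show "0 \<le> signed_integral Mp Mn f" if f: "continuous_on X f" and nonneg: "\<And>x. x \<in> X \<Longrightarrow> 0 \<le> f x" for f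
  proof -
    have "signed_integral Mp Mn (\<lambda>x. f x * -1) \<le> 0"
    proof (rule growth[where c = "\<lambda>_. 0"])
      show "SF act (Fs n) (\<lambda>x. f x * -1) x \<le> 0" if "x \<in> X" for n x
        using nonneg act_in_X[OF that] by (simp add: SF_mult_right SF_def sum_nonpos)
    qed (use f in \<open>simp_all add: continuous_intros\<close>)
    then show ?thesis
      unfolding signed_integral_mult_right by simp
  qed
  show "signed_integral Mp Mn (\<lambda>x. f (act g x)) = signed_integral Mp Mn f" if f: "continuous_on X f" for f g
  proof -
    have fg: "continuous_on X (\<lambda>x. f (act g x))"
      using continuous_on_act_comp[OF f] .
    obtain c where c: "\<And>n x. x \<in> X \<Longrightarrow> \<bar>SF act (Fs n) (\<lambda>y. f (act g y) - f y) x\<bar> \<le> c n"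
      and lim: "(\<lambda>n. c n / card (Fs n)) \<longlonglongrightarrow> 0"
      using SF_translate_diff_growth[OF f] by blast
    have "signed_integral Mp Mn (\<lambda>x. f (act g x) - f x) \<le> 0"
      using c f fg by (intro growth[OF _ _ lim]) (auto simp: SF_diff abs_le_iff intro!: continuous_intros)
    moreover have "signed_integral Mp Mn (\<lambda>x. f x - f (act g x)) \<le> 0"
      using c f fg by (intro growth[OF _ _ lim]) (auto simp: SF_diff abs_le_iff intro!: continuous_intros)
    ultimately show ?thesis
      using signed_integral_diff[OF fg f] signed_integral_diff[OF f fg] by simp
  qed
qed

end

theorem theorem4p13:
  fixes act :: "'g::{group_add, countable} \<Rightarrow> 'x::metric_space \<Rightarrow> 'x"
    and X :: "'x set" and Fs :: "nat \<Rightarrow> 'g set" and Mp Mn :: "'x measure"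
  assumes "infinite (UNIV :: 'g set)"
    and "Folner_seq Fs"
    and "G_system act X"
    and "mdim_upper act X Fs (\<lambda>_. 0) < \<infinity>"
    and "finite_borel_on X Mp" and "finite_borel_on X Mn"
  shows "(invariant_prob act X Mp Mn
            \<longleftrightarrow> (\<forall>f. continuous_on X f \<longrightarrow> ereal (signed_integral Mp Mn f) \<le> mdim_lower act X Fs f))
       \<and> (invariant_prob act X Mp Mn
            \<longleftrightarrow> (\<forall>f. continuous_on X f \<longrightarrow> ereal (signed_integral Mp Mn f) \<le> mdim_upper act X Fs f))"
proof -
  interpret amenable_signed_measure_system act X Fs Mp Mn
    by unfold_locales (fact assms)+
  have "ereal 0 \<le> mdim_lower act X Fs (\<lambda>_. 0)"
    using X_nonempty by (intro mdim_lower_ge_SF) auto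
  then obtain D where D: "mdim_upper act X Fs (\<lambda>_. 0) = ereal D"
    using assms(4) mdim_lower_le_mdim_upper[of act X Fs "\<lambda>_. 0"]
    by (cases "mdim_upper act X Fs (\<lambda>_. 0)") auto
  show ?thesis
    using signed_integral_le_mdim_lower_if_invariant invariant_prob_if_signed_integral_le_mdim_upper[OF D]
      mdim_lower_le_mdim_upper order_trans by meson
qed

end
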